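(* Let $\lambda_1,\lambda_2,\lambda_1',\lambda_2',\sigma_1,\sigma_2,\sigma_1',\sigma_2'\in\mathbb{C}^*$ and $\eta_1,\eta_2,\eta_1',\eta_2'\in\mathbb{C}$ with $\lambda_1\neq\lambda_2$ and $\lambda_1'\neq\lambda_2'$. Then the irreducible $\mathcal{G}$-modules $\Omega(\lambda_1,\eta_1,0,\sigma_1)\otimes\Omega(\lambda_2,\eta_2,0,\sigma_2)$ and $\Omega(\lambda_1',\eta_1',0,\sigma_1')\otimes\Omega(\lambda_2',\eta_2',0,\sigma_2')$ are isomorphic if and only if either $(\lambda_1,\eta_1,\sigma_1)=(\lambda_1',\eta_1',\sigma_1')$ and $(\lambda_2,\eta_2,\sigma_2)=(\lambda_2',\eta_2',\sigma_2')$, or $(\lambda_1,\eta_1,\sigma_1)=(\lambda_2',\eta_2',\sigma_2')$ and $(\lambda_2,\eta_2,\sigma_2)=(\lambda_1',\eta_1',\sigma_1')$.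
   Context: The planar Galilean conformal algebra $\mathcal{G}$ is the complex Lie algebra with basis $\{L_m,H_m,I_m,J_m\mid m\in\mathbb{Z}\}$ and brackets $[L_m,L_n]=(n-m)L_{m+n}$, $[L_m,H_n]=nH_{m+n}$, $[L_m,I_n]=(n-m)I_{m+n}$, $[L_m,J_n]=(n-m)J_{m+n}$, $[H_m,I_n]=I_{m+n}$, $[H_m,J_n]=-J_{m+n}$, and $[H_m,H_n]=[I_m,I_n]=[J_m,J_n]=[I_m,J_n]=0$ for all $m,n\in\mathbb{Z}$. For $\lambda,\sigma\in\mathbb{C}^*$, $\eta\in\mathbb{C}$, the module $\Omega(\lambda,\eta,0,\sigma)$ is $\mathbb{C}[S,T]$ with $L_m f(S,T)=\lambda^m(T+mS+m\eta)f(S,T-m)$, $H_m f(S,T)=\lambda^m S f(S,T-m)$, $I_m f(S,T)=0$, $J_m f(S,T)=\lambda^m\sigma f(S+1,T-m)$. The tensor product of $\mathcal{G}$-modules has action $x(v\otimes w)=xv\otimes w+v\otimes xw$. (When $\lambda_1\neq\lambda_2$ these tensor products are irreducible.) *)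

theory Defs
  imports Complex_Main
begin

text \<open>Basis elements of the planar Galilean conformal algebra (the algebra acts on a module
 through its basis; linear extension is implicit).\<close>
datatype gen = L int | H int | I int | J int

text \<open>Polynomial functions in two variables (S,T); since the field is infinite this is the
 polynomial ring C[S,T].\<close>
definition poly2 :: "(complex \<times> complex \<Rightarrow> complex) set" where
  "poly2 = {f. \<exists>(c :: nat \<Rightarrow> nat \<Rightarrow> complex) (N :: nat).
      f = (\<lambda>(s,t). \<Sum>i\<le>N. \<Sum>j\<le>N. c i j * s ^ i * t ^ j)}"

text \<open>The module Omega(lambda, eta, 0, sigma) acting on C[S,T].\<close>
fun omega_act :: "complex \<Rightarrow> complex \<Rightarrow> complex \<Rightarrow> gen \<Rightarrow>
    (complex \<times> complex \<Rightarrow> complex) \<Rightarrow> (complex \<times> complex \<Rightarrow> complex)" where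
  "omega_act lam eta sig (L m) f =
     (\<lambda>(s,t). lam powi m * (t + of_int m * s + of_int m * eta) * f (s, t - of_int m))"
| "omega_act lam eta sig (H m) f = (\<lambda>(s,t). lam powi m * s * f (s, t - of_int m))"
| "omega_act lam eta sig (I m) f = (\<lambda>_. 0)"
| "omega_act lam eta sig (J m) f = (\<lambda>(s,t). lam powi m * sig * f (s + 1, t - of_int m))"

text \<open>Algebraic tensor product C[S1,T1] (x) C[S2,T2], realized as the span of the functions
 (u,v) |-> f(u) g(v), i.e. f (x) g is identified with f(S1,T1) g(S2,T2).\<close>
definition tensor_carrier :: "((complex \<times> complex) \<times> (complex \<times> complex) \<Rightarrow> complex) set" where
  "tensor_carrier = {F. \<exists>(n :: nat) fs gs. (\<forall>i<n. fs i \<in> poly2 \<and> gs i \<in> poly2) \<and>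
      F = (\<lambda>(u,v). \<Sum>i<n. fs i u * gs i v)}"

definition tensor_act ::
  "(gen \<Rightarrow> ('a \<Rightarrow> complex) \<Rightarrow> ('a \<Rightarrow> complex)) \<Rightarrow> (gen \<Rightarrow> ('b \<Rightarrow> complex) \<Rightarrow> ('b \<Rightarrow> complex))
     \<Rightarrow> gen \<Rightarrow> ('a \<times> 'b \<Rightarrow> complex) \<Rightarrow> ('a \<times> 'b \<Rightarrow> complex)" where
  "tensor_act a1 a2 x F = (\<lambda>(u,v). a1 x (\<lambda>u'. F (u',v)) u + a2 x (\<lambda>v'. F (u,v')) v)"

definition omega_tensor :: "complex \<Rightarrow> complex \<Rightarrow> complex \<Rightarrow> complex \<Rightarrow> complex \<Rightarrow> complex \<Rightarrow>
    gen \<Rightarrow> ((complex \<times> complex) \<times> (complex \<times> complex) \<Rightarrow> complex) \<Rightarrow>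
    ((complex \<times> complex) \<times> (complex \<times> complex) \<Rightarrow> complex)" where
  "omega_tensor l1 e1 s1 l2 e2 s2 = tensor_act (omega_act l1 e1 s1) (omega_act l2 e2 s2)"

definition module_iso :: "('a \<Rightarrow> complex) set \<Rightarrow> (gen \<Rightarrow> ('a \<Rightarrow> complex) \<Rightarrow> ('a \<Rightarrow> complex))
    \<Rightarrow> ('b \<Rightarrow> complex) set \<Rightarrow> (gen \<Rightarrow> ('b \<Rightarrow> complex) \<Rightarrow> ('b \<Rightarrow> complex))
    \<Rightarrow> (('a \<Rightarrow> complex) \<Rightarrow> ('b \<Rightarrow> complex)) \<Rightarrow> bool" where
  "module_iso M act M' act' \<phi> \<longleftrightarrow>
     bij_betw \<phi> M M' \<and>
     (\<forall>f\<in>M. \<forall>g\<in>M. \<phi> (\<lambda>p. f p + g p) = (\<lambda>q. \<phi> f q + \<phi> g q)) \<and>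
     (\<forall>c. \<forall>f\<in>M. \<phi> (\<lambda>p. c * f p) = (\<lambda>q. c * \<phi> f q)) \<and>
     (\<forall>x. \<forall>f\<in>M. \<phi> (act x f) = act' x (\<phi> f))"

definition isomorphic_modules :: "('a \<Rightarrow> complex) set \<Rightarrow> (gen \<Rightarrow> ('a \<Rightarrow> complex) \<Rightarrow> ('a \<Rightarrow> complex))
    \<Rightarrow> ('b \<Rightarrow> complex) set \<Rightarrow> (gen \<Rightarrow> ('b \<Rightarrow> complex) \<Rightarrow> ('b \<Rightarrow> complex)) \<Rightarrow> bool" where
  "isomorphic_modules M act M' act' \<longleftrightarrow> (\<exists>\<phi>. module_iso M act M' act' \<phi>)"

end

theory Submission
  imports Defs "HOL-Library.Product_Plus"
begin

text \<open>An isomorphism \<open>\<phi>\<close> maps the constant \<open>1\<close> to a nonzero \<open>G\<close> on which every \<open>J\<^sub>m\<close> acts by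
  the scalar \<open>\<sigma>\<^sub>1 \<lambda>\<^sub>1\<^sup>m + \<sigma>\<^sub>2 \<lambda>\<^sub>2\<^sup>m\<close>. Elements of the tensor product are polynomial maps, i.e. are
  killed by iterated finite differences, and for those the eigenvalue equation of \<open>J\<^sub>m\<close> forces the
  eigenvalue to be \<open>\<sigma>\<^sub>1' \<lambda>\<^sub>1'\<^sup>m + \<sigma>\<^sub>2' \<lambda>\<^sub>2'\<^sup>m\<close> and \<open>G\<close> to be invariant under integer shifts
  of \<open>T\<^sub>1, T\<^sub>2\<close>, because a polynomial times \<open>(\<lambda>\<^sub>1/\<lambda>\<^sub>2)\<^sup>m\<close> is a polynomial only if it vanishes.
  Comparing the exponential sums for \<open>m = 0, \<dots>, 3\<close> determines the pairs \<open>(\<lambda>\<^sub>i, \<sigma>\<^sub>i)\<close> up to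
  order. On shift-invariant vectors \<open>L\<^sub>m\<close> and \<open>H\<^sub>m\<close> act by multiplication, and a combination
  \<open>Z\<^sub>n\<close> of them built from \<open>(z - \<lambda>\<^sub>1)(z - \<lambda>\<^sub>2)\<close> acts on both \<open>1\<close> and \<open>G\<close> by the scalar
  \<open>(\<lambda>\<^sub>1 - \<lambda>\<^sub>2)(\<lambda>\<^sub>1\<^sup>n \<eta>\<^sub>1 - \<lambda>\<^sub>2\<^sup>n \<eta>\<^sub>2)\<close>; the cases \<open>n = 0, 1\<close> determine the \<open>\<eta>\<^sub>i\<close>.\<close>

section \<open>Polynomial maps on abelian groups\<close>

text \<open>\<open>f \<in> diff_poly k\<close> iff every \<open>k\<close>-fold finite difference of \<open>f\<close> vanishes, i.e. \<open>f\<close> is a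
  polynomial map of degree \<open>< k\<close>.\<close>

fun diff_poly :: "nat \<Rightarrow> ('a::ab_group_add \<Rightarrow> 'b::comm_ring_1) set" where
  "diff_poly 0 = {\<lambda>_. 0}"
| "diff_poly (Suc k) = {f. \<forall>h. (\<lambda>x. f (x + h) - f x) \<in> diff_poly k}"

declare diff_poly.simps(2) [simp del]

lemma diff_poly_SucI: "(\<And>h. (\<lambda>x. f (x + h) - f x) \<in> diff_poly k) \<Longrightarrow> f \<in> diff_poly (Suc k)"
  by (simp add: diff_poly.simps(2))

lemma diff_poly_SucD: "f \<in> diff_poly (Suc k) \<Longrightarrow> (\<lambda>x. f (x + h) - f x) \<in> diff_poly k"
  by (simp add: diff_poly.simps(2))

lemma diff_poly_zero: "(\<lambda>_. 0) \<in> diff_poly k"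
  by (induction k) (auto intro: diff_poly_SucI)

lemma diff_poly_const: "(\<lambda>_. c) \<in> diff_poly (Suc 0)"
  by (rule diff_poly_SucI) simp

lemma diff_poly_lincomb:
  "f \<in> diff_poly k \<Longrightarrow> g \<in> diff_poly k \<Longrightarrow> (\<lambda>x. \<alpha> * f x + \<beta> * g x) \<in> diff_poly k"
proof (induction k arbitrary: f g)
  case (Suc k)
  show ?case
  proof (rule diff_poly_SucI)
    fix h
    have "(\<lambda>x. \<alpha> * (f (x + h) - f x) + \<beta> * (g (x + h) - g x)) \<in> diff_poly k"
      using Suc by (blast intro: diff_poly_SucD)
    then show "(\<lambda>x. \<alpha> * f (x + h) + \<beta> * g (x + h) - (\<alpha> * f x + \<beta> * g x)) \<in> diff_poly k"
      by (simp add: algebra_simps)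
  qed
qed simp

lemma diff_poly_scale: "f \<in> diff_poly k \<Longrightarrow> (\<lambda>x. c * f x) \<in> diff_poly k"
  using diff_poly_lincomb[of f k f c 0] by simp

lemma diff_poly_Suc_mono: "f \<in> diff_poly k \<Longrightarrow> f \<in> diff_poly (Suc k)"
proof (induction k arbitrary: f)
  case 0
  then show ?case by (auto intro: diff_poly_SucI)
next
  case (Suc k)
  then show ?case by (blast intro: diff_poly_SucI diff_poly_SucD)
qed

lemma diff_poly_mono: "f \<in> diff_poly k \<Longrightarrow> k \<le> k' \<Longrightarrow> f \<in> diff_poly k'"
  by (induction k') (auto intro: diff_poly_Suc_mono simp: le_Suc_eq)

lemma diff_poly_comp_affine:
  assumes "\<And>m n. g (m + n) = g m + g n"
  shows "f \<in> diff_poly k \<Longrightarrow> (\<lambda>m. f (x + g m)) \<in> diff_poly k"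
proof (induction k arbitrary: f)
  case (Suc k)
  show ?case
  proof (rule diff_poly_SucI)
    fix h
    from Suc.IH[OF diff_poly_SucD[OF Suc.prems, of "g h"]]
    show "(\<lambda>m. f (x + g (m + h)) - f (x + g m)) \<in> diff_poly k"
      by (simp add: assms add.assoc)
  qed
qed simp

lemma diff_poly_comp_affine_minus_const:
  assumes "\<And>m n. g (m + n) = g m + g n" "f \<in> diff_poly k"
  shows "(\<lambda>m. f (x + g m) - c) \<in> diff_poly (Suc k)"
proof -
  have "(\<lambda>m. f (x + g m)) \<in> diff_poly (Suc k)"
    using diff_poly_comp_affine[OF assms] by (rule diff_poly_Suc_mono)
  moreover have "(\<lambda>_. c) \<in> diff_poly (Suc k)"
    using diff_poly_const by (rule diff_poly_mono) simp
  ultimately show ?thesis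
    using diff_poly_lincomb[of _ "Suc k" _ 1 "-1"] by fastforce
qed

lemma diff_poly_translate: "f \<in> diff_poly k \<Longrightarrow> (\<lambda>x. f (x + h)) \<in> diff_poly k"
  using diff_poly_comp_affine[where g=id and x=h] by (simp add: add.commute)

lemma diff_poly_diff: "f \<in> diff_poly k \<Longrightarrow> (\<lambda>x. f (x + h) - f x) \<in> diff_poly k"
  using diff_poly_lincomb[OF diff_poly_translate[of f k h], of f 1 "-1"] by simp

lemma additive_diff_poly:
  assumes "\<And>x y. g (x + y) = g x + g y"
  shows "g \<in> diff_poly 2"
proof -
  have "(\<lambda>x. g (x + h) - g x) = (\<lambda>_. g h)" for h
    by (simp add: assms)
  then show ?thesis
    by (simp add: numeral_2_eq_2 diff_poly_SucI diff_poly_const)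
qed

lemma diff_poly_mult:
  "f \<in> diff_poly a \<Longrightarrow> g \<in> diff_poly b \<Longrightarrow> (\<lambda>x. f x * g x) \<in> diff_poly (a + b)"
proof (induction "a + b" arbitrary: a b f g)
  case 0
  then show ?case by simp
next
  case (Suc n)
  show ?case
  proof (cases "a = 0 \<or> b = 0")
    case True
    with Suc.prems show ?thesis by (auto intro: diff_poly_zero)
  next
    case False
    then obtain a' b' where a: "a = Suc a'" and b: "b = Suc b'"
      by (meson not0_implies_Suc)
    have "(\<lambda>x. f x * g x) \<in> diff_poly (Suc n)"
    proof (rule diff_poly_SucI)
      fix h
      have "(\<lambda>x. (f (x + h) - f x) * g (x + h)) \<in> diff_poly n"
        using Suc.hyps(1)[of a' b] Suc.hyps(2) Suc.prems a
        by (simp add: diff_poly_SucD diff_poly_translate)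
      moreover have "(\<lambda>x. f x * (g (x + h) - g x)) \<in> diff_poly n"
        using Suc.hyps(1)[of a b'] Suc.hyps(2) Suc.prems b
        by (simp add: diff_poly_SucD)
      ultimately have "(\<lambda>x. 1 * ((f (x + h) - f x) * g (x + h)) + 1 * (f x * (g (x + h) - g x)))
          \<in> diff_poly n"
        by (rule diff_poly_lincomb)
      then show "(\<lambda>x. f (x + h) * g (x + h) - f x * g x) \<in> diff_poly n"
        by (simp add: algebra_simps)
    qed
    with Suc.hyps(2) show ?thesis by simp
  qed
qed

text \<open>The right-hand side has smaller degree than \<open>f\<close>.\<close>

lemma diff_poly_eq_0_if_diff_comb:
  assumes "f \<in> diff_poly k"
    and "\<And>x. f x = \<alpha> * (f (x + h) - f x) + \<beta> * (f (x + h') - f x)"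
  shows "f = (\<lambda>_. 0)"
  using assms
proof (induction k arbitrary: f)
  case (Suc k)
  have "(\<lambda>x. \<alpha> * (f (x + h) - f x) + \<beta> * (f (x + h') - f x)) \<in> diff_poly k"
    using Suc.prems(1) by (intro diff_poly_lincomb diff_poly_SucD)
  also have "(\<lambda>x. \<alpha> * (f (x + h) - f x) + \<beta> * (f (x + h') - f x)) = f"
    by (rule ext) (rule Suc.prems(2)[symmetric])
  finally show ?case
    using Suc by blast
qed simp

definition is_diff_poly :: "('a::ab_group_add \<Rightarrow> 'b::comm_ring_1) \<Rightarrow> bool" where
  "is_diff_poly f \<longleftrightarrow> (\<exists>k. f \<in> diff_poly k)"

lemma is_diff_poly_const: "is_diff_poly (\<lambda>_. c)"
  unfolding is_diff_poly_def using diff_poly_const by blast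

lemma is_diff_poly_additive: "(\<And>x y. g (x + y) = g x + g y) \<Longrightarrow> is_diff_poly g"
  unfolding is_diff_poly_def using additive_diff_poly by blast

lemma is_diff_poly_mult: "is_diff_poly f \<Longrightarrow> is_diff_poly g \<Longrightarrow> is_diff_poly (\<lambda>x. f x * g x)"
  unfolding is_diff_poly_def using diff_poly_mult by blast

lemma is_diff_poly_add: "is_diff_poly f \<Longrightarrow> is_diff_poly g \<Longrightarrow> is_diff_poly (\<lambda>x. f x + g x)"
proof -
  assume "is_diff_poly f" "is_diff_poly g"
  then obtain k k' where "f \<in> diff_poly k" "g \<in> diff_poly k'"
    unfolding is_diff_poly_def by blast
  then have "f \<in> diff_poly (max k k')" "g \<in> diff_poly (max k k')"
    by (auto intro: diff_poly_mono)
  from diff_poly_lincomb[OF this, of 1 1] show ?thesis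
    unfolding is_diff_poly_def by auto
qed

lemma is_diff_poly_power: "is_diff_poly f \<Longrightarrow> is_diff_poly (\<lambda>x. f x ^ n)"
  by (induction n) (auto intro: is_diff_poly_mult is_diff_poly_const)

lemma is_diff_poly_sum:
  "(\<And>i. i \<in> A \<Longrightarrow> is_diff_poly (f i)) \<Longrightarrow> is_diff_poly (\<lambda>x. \<Sum>i\<in>A. f i x)"
  by (induction A rule: infinite_finite_induct) (auto intro: is_diff_poly_add is_diff_poly_const)

lemma diff_poly_exp_mult_eq_0:
  fixes f :: "int \<Rightarrow> 'a::field"
  assumes "r \<noteq> 0" "r \<noteq> 1"
  shows "f \<in> diff_poly k \<Longrightarrow> (\<lambda>m. r powi m * f m) \<in> diff_poly j \<Longrightarrow> f = (\<lambda>_. 0)"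
proof (induction j arbitrary: f)
  case 0
  then show ?case using \<open>r \<noteq> 0\<close> by (simp add: fun_eq_iff)
next
  case (Suc j)
  define E where "E m = r * f (m + 1) - f m" for m
  have "E = (\<lambda>m. (r - 1) * f m + r * (f (m + 1) - f m))"
    by (simp add: E_def fun_eq_iff algebra_simps)
  then have "E \<in> diff_poly k"
    using diff_poly_lincomb[OF Suc.prems(1) diff_poly_diff[OF Suc.prems(1)]] by simp
  moreover have "(\<lambda>m. r powi m * E m) \<in> diff_poly j"
    using diff_poly_SucD[OF Suc.prems(2), of 1] \<open>r \<noteq> 0\<close>
    by (simp add: E_def power_int_add algebra_simps)
  ultimately have "E = (\<lambda>_. 0)"
    by (rule Suc.IH)
  then have shift: "r * f (m + 1) = f m" for m
    by (simp add: E_def fun_eq_iff)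
  then have "f m = r / (1 - r) * (f (m + 1) - f m) + 0 * (f (m + 1) - f m)" for m
    using \<open>r \<noteq> 1\<close> shift[of m] by (simp add: field_simps)
  then show ?case
    by (rule diff_poly_eq_0_if_diff_comb[OF Suc.prems(1)])
qed

lemma diff_poly_exp_comb_eq_0:
  fixes f g :: "int \<Rightarrow> 'a::field"
  assumes "r1 \<noteq> 0" "r2 \<noteq> 0" "r1 \<noteq> r2" "f \<in> diff_poly k" "g \<in> diff_poly k"
    and comb: "\<And>m. r1 powi m * f m + r2 powi m * g m = 0"
  shows "f = (\<lambda>_. 0)" "g = (\<lambda>_. 0)"
proof -
  have "(\<lambda>m. (r1 / r2) powi m * f m) = (\<lambda>m. - 1 * g m)"
    using comb \<open>r2 \<noteq> 0\<close>
    by (simp add: fun_eq_iff power_int_divide_distrib field_simps eq_neg_iff_add_eq_0)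
  then have "(\<lambda>m. (r1 / r2) powi m * f m) \<in> diff_poly k"
    using diff_poly_scale[OF assms(5), of "- 1"] by simp
  then show f: "f = (\<lambda>_. 0)"
    using diff_poly_exp_mult_eq_0[of "r1 / r2", OF _ _ assms(4)] assms(1-3) by simp
  show "g = (\<lambda>_. 0)"
    using comb f \<open>r2 \<noteq> 0\<close> by (simp add: fun_eq_iff)
qed

type_synonym point = "(complex \<times> complex) \<times> (complex \<times> complex)"

lemma tensor_carrierI:
  fixes n :: nat and fs gs :: "nat \<Rightarrow> complex \<times> complex \<Rightarrow> complex"
  shows "\<forall>i<n. fs i \<in> poly2 \<and> gs i \<in> poly2 \<Longrightarrow> F = (\<lambda>(u, v). \<Sum>i<n. fs i u * gs i v) \<Longrightarrow>
    F \<in> tensor_carrier"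
  unfolding tensor_carrier_def by blast

lemma tensor_carrierE:
  assumes "F \<in> tensor_carrier"
  obtains n :: nat and fs gs :: "nat \<Rightarrow> complex \<times> complex \<Rightarrow> complex" where "\<forall>i<n. fs i \<in> poly2 \<and> gs i \<in> poly2"
    and "F = (\<lambda>(u, v). \<Sum>i<n. fs i u * gs i v)"
  using assms unfolding tensor_carrier_def by auto

lemma poly2_affine: "(\<lambda>(s, t). a * s + b * t + c) \<in> poly2"
  unfolding poly2_def
  by (rule CollectI, rule exI[of _ "\<lambda>i j. if i = 0 \<and> j = 0 then c else if i = 1 \<and> j = 0 then a
     else if i = 0 \<and> j = 1 then b else 0"], rule exI[of _ 1]) (simp add: fun_eq_iff)

lemma poly2_const: "(\<lambda>_. c) \<in> poly2"
  unfolding poly2_def by (rule CollectI, rule exI[of _ "\<lambda>_ _. c"], rule exI[of _ 0]) auto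

lemma poly2_scale:
  assumes "f \<in> poly2"
  shows "(\<lambda>u. a * f u) \<in> poly2"
proof -
  obtain c N where "f = (\<lambda>(s, t). \<Sum>i\<le>N. \<Sum>j\<le>N. c i j * s ^ i * t ^ j)"
    using assms unfolding poly2_def by blast
  then have "(\<lambda>u. a * f u) = (\<lambda>(s, t). \<Sum>i\<le>N. \<Sum>j\<le>N. (a * c i j) * s ^ i * t ^ j)"
    by (simp add: fun_eq_iff sum_distrib_left mult.assoc)
  then show ?thesis
    unfolding poly2_def by (intro CollectI exI)
qed

lemma poly2_comp_additive_is_diff_poly:
  assumes "f \<in> poly2" and "\<And>x y. p (x + y) = p x + p y"
  shows "is_diff_poly (\<lambda>x. f (p x))"
proof -
  obtain c N where f: "f = (\<lambda>(s, t). \<Sum>i\<le>N. \<Sum>j\<le>N. c i j * s ^ i * t ^ j)"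
    using assms(1) unfolding poly2_def by blast
  have "is_diff_poly (\<lambda>x. fst (p x))" "is_diff_poly (\<lambda>x. snd (p x))"
    by (auto intro: is_diff_poly_additive simp: assms(2))
  then show ?thesis
    unfolding f case_prod_beta
    by (intro is_diff_poly_sum is_diff_poly_mult is_diff_poly_power is_diff_poly_const)
qed

lemma tensor_carrier_is_diff_poly: "F \<in> tensor_carrier \<Longrightarrow> is_diff_poly F"
proof -
  assume "F \<in> tensor_carrier"
  then obtain n :: nat and fs gs where fg: "\<forall>i<n. fs i \<in> poly2 \<and> gs i \<in> poly2"
    and F: "F = (\<lambda>(u, v). \<Sum>i<n. fs i u * gs i v)"
    by (rule tensor_carrierE)
  have "is_diff_poly (\<lambda>x :: point. \<Sum>i<n. fs i (fst x) * gs i (snd x))"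
    using fg by (intro is_diff_poly_sum is_diff_poly_mult poly2_comp_additive_is_diff_poly) auto
  then show ?thesis
    by (simp add: F case_prod_unfold)
qed

lemma tensor_carrier_scale:
  assumes "F \<in> tensor_carrier"
  shows "(\<lambda>p. a * F p) \<in> tensor_carrier"
proof -
  obtain n :: nat and fs gs where fg: "\<forall>i<n. fs i \<in> poly2 \<and> gs i \<in> poly2"
    and F: "F = (\<lambda>(u, v). \<Sum>i<n. fs i u * gs i v)"
    using assms by (rule tensor_carrierE)
  have "(\<lambda>p. a * F p) = (\<lambda>(u, v). \<Sum>i<n. (a * fs i u) * gs i v)"
    by (simp add: F fun_eq_iff sum_distrib_left mult.assoc)
  moreover have "\<forall>i<n. (\<lambda>u. a * fs i u) \<in> poly2 \<and> gs i \<in> poly2"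
    using fg by (simp add: poly2_scale)
  ultimately show ?thesis
    by (rule tensor_carrierI[rotated])
qed

lemma tensor_carrier_add:
  assumes "F \<in> tensor_carrier" "F' \<in> tensor_carrier"
  shows "(\<lambda>p. F p + F' p) \<in> tensor_carrier"
proof -
  obtain n :: nat and fs gs where fg: "\<forall>i<n. fs i \<in> poly2 \<and> gs i \<in> poly2"
    and F: "F = (\<lambda>(u, v). \<Sum>i<n. fs i u * gs i v)"
    using assms(1) by (rule tensor_carrierE)
  obtain n' :: nat and fs' gs' where fg': "\<forall>i<n'. fs' i \<in> poly2 \<and> gs' i \<in> poly2"
    and F': "F' = (\<lambda>(u, v). \<Sum>i<n'. fs' i u * gs' i v)"
    using assms(2) by (rule tensor_carrierE)
  define FS where "FS i = (if i < n then fs i else fs' (i - n))" for i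
  define GS where "GS i = (if i < n then gs i else gs' (i - n))" for i
  have sum_split: "(\<Sum>i<n + k. h i) = (\<Sum>i<n. h i) + (\<Sum>i<k. h (n + i))" for k and h :: "nat \<Rightarrow> complex"
    by (induction k) (simp_all add: add.assoc)
  have "(\<lambda>p. F p + F' p) = (\<lambda>(u, v). \<Sum>i<n + n'. FS i u * GS i v)"
    by (simp add: F F' fun_eq_iff sum_split FS_def GS_def)
  moreover have "\<forall>i<n + n'. FS i \<in> poly2 \<and> GS i \<in> poly2"
    using fg fg' by (auto simp: FS_def GS_def)
  ultimately show ?thesis
    by (rule tensor_carrierI[rotated])
qed

lemma tensor_carrier_sum_separate:
  assumes "f \<in> poly2" "g \<in> poly2"
  shows "(\<lambda>(u, v). f u + g v) \<in> tensor_carrier"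
  unfolding tensor_carrier_def
  by (rule CollectI, rule exI[of _ 2], rule exI[of _ "\<lambda>i. if i = 0 then f else (\<lambda>_. 1)"],
      rule exI[of _ "\<lambda>i. if i = 0 then (\<lambda>_. 1) else g"])
     (auto simp: assms poly2_const fun_eq_iff numeral_2_eq_2)

lemma tensor_carrier_one: "(\<lambda>_. 1) \<in> tensor_carrier"
  using tensor_carrier_sum_separate[OF poly2_const poly2_const, of 1 0] by (simp add: case_prod_unfold)

lemma tensor_carrier_swap:
  assumes "F \<in> tensor_carrier"
  shows "(\<lambda>(u, v). F (v, u)) \<in> tensor_carrier"
proof -
  obtain n :: nat and fs gs where fg: "\<forall>i<n. fs i \<in> poly2 \<and> gs i \<in> poly2"
    and F: "F = (\<lambda>(u, v). \<Sum>i<n. fs i u * gs i v)"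
    using assms by (rule tensor_carrierE)
  have "(\<lambda>(u, v). F (v, u)) = (\<lambda>(u, v). \<Sum>i<n. gs i u * fs i v)"
    by (simp add: F fun_eq_iff mult.commute)
  moreover have "\<forall>i<n. gs i \<in> poly2 \<and> fs i \<in> poly2"
    using fg by blast
  ultimately show ?thesis
    by (rule tensor_carrierI[rotated])
qed

lemma omega_tensor_L_one: "omega_tensor l1 e1 s1 l2 e2 s2 (L m) (\<lambda>_. 1) \<in> tensor_carrier"
proof -
  have "omega_tensor l1 e1 s1 l2 e2 s2 (L m) (\<lambda>_. 1) =
    (\<lambda>(u, v). (\<lambda>(s, t). l1 powi m * of_int m * s + l1 powi m * t + l1 powi m * of_int m * e1) u +
              (\<lambda>(s, t). l2 powi m * of_int m * s + l2 powi m * t + l2 powi m * of_int m * e2) v)"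
    by (simp add: fun_eq_iff omega_tensor_def tensor_act_def algebra_simps)
  then show ?thesis
    by (simp only:) (rule tensor_carrier_sum_separate[OF poly2_affine poly2_affine])
qed

lemma omega_tensor_H_one: "omega_tensor l1 e1 s1 l2 e2 s2 (H m) (\<lambda>_. 1) \<in> tensor_carrier"
proof -
  have "omega_tensor l1 e1 s1 l2 e2 s2 (H m) (\<lambda>_. 1) =
    (\<lambda>(u, v). (\<lambda>(s, t). l1 powi m * s + 0 * t + 0) u + (\<lambda>(s, t). l2 powi m * s + 0 * t + 0) v)"
    by (simp add: fun_eq_iff omega_tensor_def tensor_act_def)
  then show ?thesis
    by (simp only:) (rule tensor_carrier_sum_separate[OF poly2_affine poly2_affine])
qed

definition act_comb ::
  "(gen \<Rightarrow> ('a \<Rightarrow> complex) \<Rightarrow> 'a \<Rightarrow> complex) \<Rightarrow> (complex \<times> gen) list \<Rightarrow> ('a \<Rightarrow> complex) \<Rightarrow> 'a \<Rightarrow> complex"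
  where "act_comb act cs F = (\<lambda>p. \<Sum>(c, x)\<leftarrow>cs. c * act x F p)"

lemma act_comb_Nil: "act_comb act [] F = (\<lambda>_. 0)"
  by (simp add: act_comb_def)

lemma act_comb_Cons: "act_comb act ((c, x) # cs) F = (\<lambda>p. c * act x F p + act_comb act cs F p)"
  by (simp add: act_comb_def)

definition lin_closed :: "('a \<Rightarrow> complex) set \<Rightarrow> bool" where
  "lin_closed M \<longleftrightarrow> (\<forall>f\<in>M. \<forall>g\<in>M. (\<lambda>p. f p + g p) \<in> M) \<and> (\<forall>c. \<forall>f\<in>M. (\<lambda>p. c * f p) \<in> M)"

lemma lin_closed_tensor_carrier: "lin_closed tensor_carrier"
  by (simp add: lin_closed_def tensor_carrier_add tensor_carrier_scale)

lemma lin_closed_add: "lin_closed M \<Longrightarrow> f \<in> M \<Longrightarrow> g \<in> M \<Longrightarrow> (\<lambda>p. f p + g p) \<in> M"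
  by (simp add: lin_closed_def)

lemma lin_closed_scale: "lin_closed M \<Longrightarrow> f \<in> M \<Longrightarrow> (\<lambda>p. c * f p) \<in> M"
  by (simp add: lin_closed_def)

context
  fixes M :: "('a \<Rightarrow> complex) set" and act M' act' \<phi>
  assumes iso: "module_iso M act M' act' \<phi>" and closed: "lin_closed M"
begin

lemma module_iso_add: "f \<in> M \<Longrightarrow> g \<in> M \<Longrightarrow> \<phi> (\<lambda>p. f p + g p) = (\<lambda>q. \<phi> f q + \<phi> g q)"
  using iso unfolding module_iso_def by blast

lemma module_iso_scale: "f \<in> M \<Longrightarrow> \<phi> (\<lambda>p. c * f p) = (\<lambda>q. c * \<phi> f q)"
  using iso unfolding module_iso_def by blast

lemma module_iso_act: "f \<in> M \<Longrightarrow> \<phi> (act x f) = act' x (\<phi> f)"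
  using iso unfolding module_iso_def by blast

lemma module_iso_zero: "f \<in> M \<Longrightarrow> \<phi> (\<lambda>_. 0) = (\<lambda>_. 0)"
  using module_iso_scale[of f 0] by simp

lemma module_iso_nonzero:
  assumes "f \<in> M" "f \<noteq> (\<lambda>_. 0)"
  shows "\<phi> f \<noteq> (\<lambda>_. 0)"
proof
  assume "\<phi> f = (\<lambda>_. 0)"
  moreover have "(\<lambda>_. 0) \<in> M"
    using lin_closed_scale[OF closed assms(1), of 0] by simp
  moreover have "inj_on \<phi> M"
    using iso by (simp add: module_iso_def bij_betw_def)
  ultimately have "f = (\<lambda>_. 0)"
    using assms(1) module_iso_zero[OF assms(1)] by (metis inj_onD)
  with assms(2) show False ..
qed

lemma module_iso_act_eigen:
  assumes "f \<in> M" "act x f = (\<lambda>p. \<kappa> * f p)"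
  shows "act' x (\<phi> f) = (\<lambda>q. \<kappa> * \<phi> f q)"
proof -
  have "act' x (\<phi> f) = \<phi> (act x f)"
    using module_iso_act[OF assms(1)] by simp
  also have "\<dots> = (\<lambda>q. \<kappa> * \<phi> f q)"
    unfolding assms(2) by (rule module_iso_scale[OF assms(1)])
  finally show ?thesis .
qed

lemma act_comb_closed:
  "f \<in> M \<Longrightarrow> (\<And>c x. (c, x) \<in> set cs \<Longrightarrow> act x f \<in> M) \<Longrightarrow> act_comb act cs f \<in> M"
proof (induction cs)
  case Nil
  then show ?case
    using lin_closed_scale[OF closed, of f 0] by (simp add: act_comb_Nil)
next
  case (Cons cx cs)
  obtain c x where cx: "cx = (c, x)"
    by fastforce
  have "act x f \<in> M" "act_comb act cs f \<in> M"
    using Cons cx by auto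
  then show ?case
    by (simp add: cx act_comb_Cons lin_closed_add[OF closed] lin_closed_scale[OF closed])
qed

lemma module_iso_act_comb:
  "f \<in> M \<Longrightarrow> (\<And>c x. (c, x) \<in> set cs \<Longrightarrow> act x f \<in> M) \<Longrightarrow>
    \<phi> (act_comb act cs f) = act_comb act' cs (\<phi> f)"
proof (induction cs)
  case Nil
  then show ?case
    by (simp add: act_comb_Nil module_iso_zero)
next
  case (Cons cx cs)
  obtain c x where cx: "cx = (c, x)"
    by fastforce
  have "act x f \<in> M" "act_comb act cs f \<in> M"
    using Cons.prems cx by (auto intro: act_comb_closed)
  moreover have "\<phi> (act_comb act cs f) = act_comb act' cs (\<phi> f)"
    using Cons by auto
  ultimately show ?case
    using Cons.prems
    by (simp add: cx act_comb_Cons module_iso_add lin_closed_scale[OF closed] module_iso_scale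
        module_iso_act)
qed

lemma module_iso_act_comb_eigen:
  assumes "f \<in> M" "\<And>c x. (c, x) \<in> set cs \<Longrightarrow> act x f \<in> M"
    and "act_comb act cs f = (\<lambda>p. \<kappa> * f p)"
  shows "act_comb act' cs (\<phi> f) = (\<lambda>q. \<kappa> * \<phi> f q)"
proof -
  have "act_comb act' cs (\<phi> f) = \<phi> (act_comb act cs f)"
    using module_iso_act_comb[OF assms(1,2)] by simp
  also have "\<dots> = (\<lambda>q. \<kappa> * \<phi> f q)"
    unfolding assms(3) by (rule module_iso_scale[OF assms(1)])
  finally show ?thesis .
qed

end

section \<open>Joint eigenvectors of the \<open>J\<^sub>m\<close>\<close>

lemma omega_tensor_J:
  "omega_tensor l1 e1 s1 l2 e2 s2 (J m) G x =
     l1 powi m * s1 * G (x + ((1, - of_int m), 0)) + l2 powi m * s2 * G (x + (0, (1, - of_int m)))"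
  by (cases x) (auto simp: omega_tensor_def tensor_act_def)

lemma J_eigenvalue:
  assumes "is_diff_poly G" "G \<noteq> (\<lambda>_. 0)"
    and eigen: "omega_tensor l1 e1 s1 l2 e2 s2 (J m) G = (\<lambda>p. c * G p)"
  shows "c = s1 * l1 powi m + s2 * l2 powi m"
proof (rule ccontr)
  define \<kappa> where "\<kappa> = c - (s1 * l1 powi m + s2 * l2 powi m)"
  assume "c \<noteq> s1 * l1 powi m + s2 * l2 powi m"
  then have "\<kappa> \<noteq> 0"
    by (simp add: \<kappa>_def)
  obtain k where "G \<in> diff_poly k"
    using assms(1) unfolding is_diff_poly_def by blast
  moreover have "G x = l1 powi m * s1 / \<kappa> * (G (x + ((1, - of_int m), 0)) - G x)
      + l2 powi m * s2 / \<kappa> * (G (x + (0, (1, - of_int m))) - G x)" for x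
  proof -
    have "\<kappa> * G x = l1 powi m * s1 * (G (x + ((1, - of_int m), 0)) - G x)
        + l2 powi m * s2 * (G (x + (0, (1, - of_int m))) - G x)"
      using fun_cong[OF eigen, of x] by (simp add: omega_tensor_J \<kappa>_def algebra_simps)
    then show ?thesis
      using \<open>\<kappa> \<noteq> 0\<close> by (simp add: divide_simps) (simp add: algebra_simps)
  qed
  ultimately have "G = (\<lambda>_. 0)"
    by (rule diff_poly_eq_0_if_diff_comb)
  with assms(2) show False ..
qed

definition T_invariant :: "(point \<Rightarrow> complex) \<Rightarrow> bool" where
  "T_invariant G \<longleftrightarrow> (\<forall>s t v m. G ((s, t - of_int m), v) = G ((s, t), v)) \<and>
                      (\<forall>s t u m. G (u, (s, t - of_int m)) = G (u, (s, t)))"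

lemma J_eigenvector_T_invariant:
  assumes "l1 \<noteq> 0" "l2 \<noteq> 0" "l1 \<noteq> l2" "s1 \<noteq> 0" "s2 \<noteq> 0" "is_diff_poly G"
    and eigen: "\<And>m. omega_tensor l1 e1 s1 l2 e2 s2 (J m) G = (\<lambda>p. (s1 * l1 powi m + s2 * l2 powi m) * G p)"
  shows "T_invariant G"
proof -
  obtain k where k: "G \<in> diff_poly k"
    using assms(6) unfolding is_diff_poly_def by blast
  have shifts: "G (x + ((1, - of_int m), 0)) = G x \<and> G (x + (0, (1, - of_int m))) = G x" for x m
  proof -
    define f where "f m = s1 * (G (x + ((1, - of_int m), 0)) - G x)" for m
    define g where "g m = s2 * (G (x + (0, (1, - of_int m))) - G x)" for m
    have "(\<lambda>m. G (x + ((1, 0), 0) + ((0, - of_int m), 0)) - G x) \<in> diff_poly (Suc k)"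
      by (rule diff_poly_comp_affine_minus_const[OF _ k]) simp
    then have f: "f \<in> diff_poly (Suc k)"
      unfolding f_def by (intro diff_poly_scale) (simp add: add.assoc)
    have "(\<lambda>m. G (x + (0, (1, 0)) + (0, (0, - of_int m))) - G x) \<in> diff_poly (Suc k)"
      by (rule diff_poly_comp_affine_minus_const[OF _ k]) simp
    then have g: "g \<in> diff_poly (Suc k)"
      unfolding g_def by (intro diff_poly_scale) (simp add: add.assoc)
    have "l1 powi m * f m + l2 powi m * g m = 0" for m
      using fun_cong[OF eigen[of m], of x] by (simp add: omega_tensor_J f_def g_def algebra_simps)
    from diff_poly_exp_comb_eq_0[OF assms(1-3) f g this]
    show ?thesis
      using assms(4,5) by (simp add: f_def g_def fun_eq_iff)
  qed
  show ?thesis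
    unfolding T_invariant_def
  proof (intro conjI allI)
    fix s t u m
    show "G ((s, t - of_int m), u) = G ((s, t), u)"
      using shifts[of "((s - 1, t), u)" m] shifts[of "((s - 1, t), u)" 0] by simp
    show "G (u, (s, t - of_int m)) = G (u, (s, t))"
      using shifts[of "(u, (s - 1, t))" m] shifts[of "(u, (s - 1, t))" 0] by simp
  qed
qed

section \<open>The operators \<open>Z\<^sub>n\<close>\<close>

lemma omega_tensor_L_T_invariant:
  "T_invariant G \<Longrightarrow> omega_tensor l1 e1 s1 l2 e2 s2 (L m) G ((s, t), (s', t')) =
    (l1 powi m * (t + of_int m * s + of_int m * e1) + l2 powi m * (t' + of_int m * s' + of_int m * e2))
      * G ((s, t), (s', t'))"
  unfolding T_invariant_def by (simp add: omega_tensor_def tensor_act_def algebra_simps)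

lemma omega_tensor_H_T_invariant:
  "T_invariant G \<Longrightarrow> omega_tensor l1 e1 s1 l2 e2 s2 (H m) G ((s, t), (s', t')) =
    (l1 powi m * s + l2 powi m * s') * G ((s, t), (s', t'))"
  unfolding T_invariant_def by (simp add: omega_tensor_def tensor_act_def algebra_simps)

text \<open>On \<open>T\<close>-invariant vectors \<open>L\<^sub>m - m H\<^sub>m\<close> acts by \<open>\<Sum>\<^sub>i \<lambda>\<^sub>i\<^sup>m (T\<^sub>i + m \<eta>\<^sub>i)\<close>.
  \<open>Z_comb u v n\<close> combines three consecutive such operators with the coefficients of
  \<open>z\<^sup>2 - u z + v\<close>; for \<open>u = \<lambda>\<^sub>1 + \<lambda>\<^sub>2\<close>, \<open>v = \<lambda>\<^sub>1 \<lambda>\<^sub>2\<close> the \<open>T\<^sub>i\<close> cancel.\<close>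

definition Z_comb :: "complex \<Rightarrow> complex \<Rightarrow> int \<Rightarrow> (complex \<times> gen) list" where
  "Z_comb u v n =
    [(v, L (n - 1)), (- v * of_int (n - 1), H (n - 1)),
     (- u, L n), (u * of_int n, H n),
     (1, L (n + 1)), (- of_int (n + 1), H (n + 1))]"

lemma omega_tensor_Z_comb_T_invariant:
  assumes "T_invariant G" "l1 \<noteq> 0" "l2 \<noteq> 0"
  shows "act_comb (omega_tensor l1 e1 s1 l2 e2 s2) (Z_comb (l1 + l2) (l1 * l2) n) G =
    (\<lambda>p. (l1 - l2) * (l1 powi n * e1 - l2 powi n * e2) * G p)"
proof
  fix p :: point
  obtain s t s' t' where p: "p = ((s, t), (s', t'))"
    by (metis prod.collapse)
  have powers: "l1 powi (n - 1) = l1 powi n / l1" "l1 powi (1 + n) = l1 powi n * l1"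
    "l2 powi (n - 1) = l2 powi n / l2" "l2 powi (1 + n) = l2 powi n * l2"
    using assms(2,3) by (simp_all add: power_int_diff power_int_add)
  show "act_comb (omega_tensor l1 e1 s1 l2 e2 s2) (Z_comb (l1 + l2) (l1 * l2) n) G p =
      (l1 - l2) * (l1 powi n * e1 - l2 powi n * e2) * G p"
    unfolding p act_comb_def Z_comb_def
    using assms(2,3)
    by (simp add: omega_tensor_L_T_invariant[OF assms(1)] omega_tensor_H_T_invariant[OF assms(1)]
        powers field_simps)
qed

section \<open>Exponential sums\<close>

lemma exp_sums_eq_root:
  fixes l1 l2 l1' l2' s1 s2 s1' s2' :: "'a::comm_ring_1"
  assumes "\<And>n. s1 * l1 ^ n + s2 * l2 ^ n = s1' * l1' ^ n + s2' * l2' ^ n"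
  shows "s1 * (l1 - l2) * (l1 - l1') * (l1 - l2') = 0"
proof -
  \<comment> \<open>apply \<open>(z - l2) (z - l1') (z - l2')\<close>, which annihilates all terms but \<open>s1 l1\<^sup>n\<close>\<close>
  have "s1 * (l1 - l2) * (l1 - l1') * (l1 - l2') =
    (s1 * l1 ^ 3 + s2 * l2 ^ 3 - (s1' * l1' ^ 3 + s2' * l2' ^ 3))
    - (l2 + l1' + l2') * (s1 * l1 ^ 2 + s2 * l2 ^ 2 - (s1' * l1' ^ 2 + s2' * l2' ^ 2))
    + (l2 * l1' + l2 * l2' + l1' * l2') * (s1 * l1 ^ 1 + s2 * l2 ^ 1 - (s1' * l1' ^ 1 + s2' * l2' ^ 1))
    - l2 * l1' * l2' * (s1 * l1 ^ 0 + s2 * l2 ^ 0 - (s1' * l1' ^ 0 + s2' * l2' ^ 0))"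
    by (simp add: algebra_simps power2_eq_square power3_eq_cube)
  also have "\<dots> = 0"
    by (simp only: assms diff_self) simp
  finally show ?thesis .
qed

lemma exp_sums_eq_imp_params_eq:
  fixes l1 l2 l1' l2' s1 s2 s1' s2' :: "'a::idom"
  assumes "l1 \<noteq> l2" "l1' \<noteq> l2'" "s1 \<noteq> 0" "s2 \<noteq> 0"
    and sums: "\<And>n. s1 * l1 ^ n + s2 * l2 ^ n = s1' * l1' ^ n + s2' * l2' ^ n"
  shows "(l1 = l1' \<and> l2 = l2' \<and> s1 = s1' \<and> s2 = s2') \<or> (l1 = l2' \<and> l2 = l1' \<and> s1 = s2' \<and> s2 = s1')"
proof -
  have "l1 = l1' \<or> l1 = l2'"
    using exp_sums_eq_root[OF sums] assms(1,3) by simp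
  moreover have "l2 = l1' \<or> l2 = l2'"
    using exp_sums_eq_root[of s2 l2 s1 l1 s1' l1' s2' l2'] sums assms(1,4) by (simp add: add.commute)
  moreover have sum0: "s1 + s2 = s1' + s2'" and sum1: "s1 * l1 + s2 * l2 = s1' * l1' + s2' * l2'"
    using sums[of 0] sums[of 1] by simp_all
  ultimately consider "l1 = l1'" "l2 = l2'" | "l1 = l2'" "l2 = l1'"
    using assms(1,2) by blast
  then show ?thesis
  proof cases
    case 1
    have "(s1 - s1') * (l1 - l2) = s1 * l1 + s2 * l2 - (s1' * l1 + (s1 + s2 - s1') * l2)"
      by (simp add: algebra_simps)
    also have "\<dots> = 0"
      using sum0 sum1 1 by (simp add: algebra_simps)
    finally have "s1 = s1'"
      using assms(1) by simp
    with 1 sum0 show ?thesis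
      by simp
  next
    case 2
    have "(s1 - s2') * (l1 - l2) = s1 * l1 + s2 * l2 - ((s1 + s2 - s2') * l2 + s2' * l1)"
      by (simp add: algebra_simps)
    also have "\<dots> = 0"
      using sum0 sum1 2 by (simp add: algebra_simps)
    finally have "s1 = s2'"
      using assms(1) by simp
    with 2 sum0 show ?thesis
      by (simp add: add.commute)
  qed
qed

lemma powi_combs_eq_imp_eq:
  fixes l1 l2 a b a' b' :: "'a::field"
  assumes "l1 \<noteq> l2"
    and "\<And>n. l1 powi n * a - l2 powi n * b = l1 powi n * a' - l2 powi n * b'"
  shows "a = a' \<and> b = b'"
proof -
  have diff: "b - b' = a - a'"
    using assms(2)[of 0] by (simp add: algebra_simps)
  have "l1 * (a - a') = l2 * (b - b')"
    using assms(2)[of 1] by (simp add: algebra_simps)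
  then have "(l1 - l2) * (a - a') = 0"
    by (simp add: left_diff_distrib diff)
  then show ?thesis
    using assms(1) diff by simp
qed

lemma params_eq_if_invariants_eq:
  fixes l1 l2 l1' l2' s1 s2 s1' s2' e1 e2 e1' e2' :: complex
  assumes "l1 \<noteq> l2" "l1' \<noteq> l2'" "s1 \<noteq> 0" "s2 \<noteq> 0"
    and J: "\<And>n. s1 * l1 ^ n + s2 * l2 ^ n = s1' * l1' ^ n + s2' * l2' ^ n"
    and Z: "\<And>n. l1 + l2 = l1' + l2' \<Longrightarrow> l1 * l2 = l1' * l2' \<Longrightarrow>
      (l1 - l2) * (l1 powi n * e1 - l2 powi n * e2) = (l1' - l2') * (l1' powi n * e1' - l2' powi n * e2')"
  shows "((l1, e1, s1) = (l1', e1', s1') \<and> (l2, e2, s2) = (l2', e2', s2')) \<or>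
         ((l1, e1, s1) = (l2', e2', s2') \<and> (l2, e2, s2) = (l1', e1', s1'))"
  using exp_sums_eq_imp_params_eq[OF assms(1-4) J]
proof (elim disjE conjE)
  assume l: "l1 = l1'" "l2 = l2'" and s: "s1 = s1'" "s2 = s2'"
  have "e1 = e1' \<and> e2 = e2'"
  proof (rule powi_combs_eq_imp_eq[OF assms(1)])
    fix n :: int
    show "l1 powi n * e1 - l2 powi n * e2 = l1 powi n * e1' - l2 powi n * e2'"
      using Z[of n] l assms(1) by simp
  qed
  with l s show ?thesis
    by simp
next
  assume l: "l1 = l2'" "l2 = l1'" and s: "s1 = s2'" "s2 = s1'"
  have "e1 = e2' \<and> e2 = e1'"
  proof (rule powi_combs_eq_imp_eq[OF assms(1)])
    fix n :: int
    have "(l1 - l2) * (l1 powi n * e1 - l2 powi n * e2) = (l1 - l2) * (l1 powi n * e2' - l2 powi n * e1')"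
      using Z[of n] l by (simp add: algebra_simps)
    then show "l1 powi n * e1 - l2 powi n * e2 = l1 powi n * e2' - l2 powi n * e1'"
      using assms(1) by simp
  qed
  with l s show ?thesis
    by simp
qed

lemma omega_tensor_iso_image_one:
  fixes \<phi> :: "(point \<Rightarrow> complex) \<Rightarrow> point \<Rightarrow> complex"
  assumes "l1' \<noteq> 0" "l2' \<noteq> 0" "l1' \<noteq> l2'" "s1' \<noteq> 0" "s2' \<noteq> 0"
    and iso: "module_iso tensor_carrier (omega_tensor l1 e1 s1 l2 e2 s2)
                tensor_carrier (omega_tensor l1' e1' s1' l2' e2' s2') \<phi>"
  shows "\<phi> (\<lambda>_. 1) \<noteq> (\<lambda>_. 0)" and "T_invariant (\<phi> (\<lambda>_. 1))"
    and "s1 * l1 powi m + s2 * l2 powi m = s1' * l1' powi m + s2' * l2' powi m"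
proof -
  note iso_facts = iso lin_closed_tensor_carrier
  have one: "(\<lambda>_. 1) \<in> tensor_carrier"
    by (rule tensor_carrier_one)
  have "bij_betw \<phi> tensor_carrier tensor_carrier"
    using iso by (simp add: module_iso_def)
  then have "\<phi> (\<lambda>_. 1) \<in> tensor_carrier"
    using one by (rule bij_betw_apply)
  then have diff_poly: "is_diff_poly (\<phi> (\<lambda>_. 1))"
    by (rule tensor_carrier_is_diff_poly)
  show nonzero: "\<phi> (\<lambda>_. 1) \<noteq> (\<lambda>_. 0)"
    by (rule module_iso_nonzero[OF iso_facts one]) (simp add: fun_eq_iff)
  have eigen: "omega_tensor l1' e1' s1' l2' e2' s2' (J n) (\<phi> (\<lambda>_. 1)) =
      (\<lambda>q. (s1 * l1 powi n + s2 * l2 powi n) * \<phi> (\<lambda>_. 1) q)" for n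
    by (rule module_iso_act_eigen[OF iso_facts one]) (simp add: fun_eq_iff omega_tensor_J algebra_simps)
  have sums: "s1 * l1 powi n + s2 * l2 powi n = s1' * l1' powi n + s2' * l2' powi n" for n
    using J_eigenvalue[OF diff_poly nonzero eigen] .
  then show "s1 * l1 powi m + s2 * l2 powi m = s1' * l1' powi m + s2' * l2' powi m" .
  show "T_invariant (\<phi> (\<lambda>_. 1))"
  proof (rule J_eigenvector_T_invariant[OF assms(1-5) diff_poly])
    show "omega_tensor l1' e1' s1' l2' e2' s2' (J n) (\<phi> (\<lambda>_. 1)) =
        (\<lambda>q. (s1' * l1' powi n + s2' * l2' powi n) * \<phi> (\<lambda>_. 1) q)" for n
      using eigen[of n] by (simp only: sums)
  qed
qed

lemma omega_tensor_iso_Z_eigenvalue: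
  fixes \<phi> :: "(point \<Rightarrow> complex) \<Rightarrow> point \<Rightarrow> complex"
  assumes "l1 \<noteq> 0" "l2 \<noteq> 0" "l1' \<noteq> 0" "l2' \<noteq> 0" "l1' \<noteq> l2'" "s1' \<noteq> 0" "s2' \<noteq> 0"
    and "l1 + l2 = l1' + l2'" "l1 * l2 = l1' * l2'"
    and iso: "module_iso tensor_carrier (omega_tensor l1 e1 s1 l2 e2 s2)
                tensor_carrier (omega_tensor l1' e1' s1' l2' e2' s2') \<phi>"
  shows "(l1 - l2) * (l1 powi n * e1 - l2 powi n * e2) = (l1' - l2') * (l1' powi n * e1' - l2' powi n * e2')"
proof -
  let ?G = "\<phi> (\<lambda>_. 1)"
  let ?\<kappa> = "(l1 - l2) * (l1 powi n * e1 - l2 powi n * e2)"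
  let ?\<kappa>' = "(l1' - l2') * (l1' powi n * e1' - l2' powi n * e2')"
  have "T_invariant (\<lambda>_. 1)"
    by (simp add: T_invariant_def)
  then have "act_comb (omega_tensor l1 e1 s1 l2 e2 s2) (Z_comb (l1 + l2) (l1 * l2) n) (\<lambda>_. 1) =
      (\<lambda>p. ?\<kappa> * 1)"
    using omega_tensor_Z_comb_T_invariant assms(1,2) by blast
  then have "act_comb (omega_tensor l1' e1' s1' l2' e2' s2') (Z_comb (l1 + l2) (l1 * l2) n) ?G =
      (\<lambda>q. ?\<kappa> * ?G q)"
    by (intro module_iso_act_comb_eigen[OF iso lin_closed_tensor_carrier tensor_carrier_one])
       (auto simp: Z_comb_def omega_tensor_L_one omega_tensor_H_one)
  moreover have "act_comb (omega_tensor l1' e1' s1' l2' e2' s2') (Z_comb (l1 + l2) (l1 * l2) n) ?G =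
      (\<lambda>q. ?\<kappa>' * ?G q)"
    unfolding assms(8,9)
    by (rule omega_tensor_Z_comb_T_invariant[OF omega_tensor_iso_image_one(2)[OF assms(3-7) iso] assms(3,4)])
  ultimately have "(\<lambda>q. ?\<kappa> * ?G q) = (\<lambda>q. ?\<kappa>' * ?G q)"
    by simp
  moreover obtain q where "?G q \<noteq> 0"
    using omega_tensor_iso_image_one(1)[OF assms(3-7) iso] by fastforce
  ultimately show ?thesis
    by (metis mult_cancel_right)
qed

lemma module_iso_id: "module_iso M act M act id"
  by (simp add: module_iso_def bij_betw_id)

lemma omega_tensor_swap_iso:
  "module_iso tensor_carrier (omega_tensor l1 e1 s1 l2 e2 s2) tensor_carrier (omega_tensor l2 e2 s2 l1 e1 s1)
     (\<lambda>F (u, v). F (v, u))"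
  unfolding module_iso_def
proof (intro conjI ballI allI)
  show "bij_betw (\<lambda>F (u, v). F (v, u)) tensor_carrier tensor_carrier"
    by (rule bij_betw_byWitness[where f' = "\<lambda>F (u, v). F (v, u)"]) (auto simp: tensor_carrier_swap)
qed (auto simp: fun_eq_iff omega_tensor_def tensor_act_def)

lemma omega_tensor_isomorphic_imp_params_eq:
  fixes l1 e1 s1 l2 e2 s2 l1' e1' s1' l2' e2' s2' :: complex
  assumes "l1 \<noteq> 0" "l2 \<noteq> 0" "l1' \<noteq> 0" "l2' \<noteq> 0"
    and "s1 \<noteq> 0" "s2 \<noteq> 0" "s1' \<noteq> 0" "s2' \<noteq> 0"
    and "l1 \<noteq> l2" "l1' \<noteq> l2'"
    and "isomorphic_modules tensor_carrier (omega_tensor l1 e1 s1 l2 e2 s2)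
           tensor_carrier (omega_tensor l1' e1' s1' l2' e2' s2')"
  shows "((l1, e1, s1) = (l1', e1', s1') \<and> (l2, e2, s2) = (l2', e2', s2')) \<or>
         ((l1, e1, s1) = (l2', e2', s2') \<and> (l2, e2, s2) = (l1', e1', s1'))"
proof -
  obtain \<phi> where iso: "module_iso tensor_carrier (omega_tensor l1 e1 s1 l2 e2 s2)
      tensor_carrier (omega_tensor l1' e1' s1' l2' e2' s2') \<phi>"
    using assms(11) unfolding isomorphic_modules_def by blast
  show ?thesis
  proof (rule params_eq_if_invariants_eq[OF assms(9,10,5,6)])
    show "s1 * l1 ^ n + s2 * l2 ^ n = s1' * l1' ^ n + s2' * l2' ^ n" for n
      using omega_tensor_iso_image_one(3)[OF assms(3,4,10,7,8) iso, of "int n"] by simp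
    show "(l1 - l2) * (l1 powi n * e1 - l2 powi n * e2) = (l1' - l2') * (l1' powi n * e1' - l2' powi n * e2')"
      if "l1 + l2 = l1' + l2'" "l1 * l2 = l1' * l2'" for n
      by (rule omega_tensor_iso_Z_eigenvalue[OF assms(1-4,10,7,8) that iso])
  qed
qed

lemma omega_tensor_isomorphic_if_params_eq:
  fixes l1 e1 s1 l2 e2 s2 l1' e1' s1' l2' e2' s2' :: complex
  assumes "((l1, e1, s1) = (l1', e1', s1') \<and> (l2, e2, s2) = (l2', e2', s2')) \<or>
           ((l1, e1, s1) = (l2', e2', s2') \<and> (l2, e2, s2) = (l1', e1', s1'))"
  shows "isomorphic_modules tensor_carrier (omega_tensor l1 e1 s1 l2 e2 s2)
           tensor_carrier (omega_tensor l1' e1' s1' l2' e2' s2')"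
  using assms unfolding isomorphic_modules_def
proof (elim disjE)
  assume "(l1, e1, s1) = (l1', e1', s1') \<and> (l2, e2, s2) = (l2', e2', s2')"
  then show "\<exists>\<phi>. module_iso tensor_carrier (omega_tensor l1 e1 s1 l2 e2 s2)
                 tensor_carrier (omega_tensor l1' e1' s1' l2' e2' s2') \<phi>"
    using module_iso_id by auto
next
  assume "(l1, e1, s1) = (l2', e2', s2') \<and> (l2, e2, s2) = (l1', e1', s1')"
  then show "\<exists>\<phi>. module_iso tensor_carrier (omega_tensor l1 e1 s1 l2 e2 s2)
                 tensor_carrier (omega_tensor l1' e1' s1' l2' e2' s2') \<phi>"
    using omega_tensor_swap_iso[of l2' e2' s2' l1' e1' s1'] by auto
qed

theorem theorem4p8:
  fixes l1 l2 l1' l2' s1 s2 s1' s2' e1 e2 e1' e2' :: complex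
  assumes "l1 \<noteq> 0" "l2 \<noteq> 0" "l1' \<noteq> 0" "l2' \<noteq> 0"
    and "s1 \<noteq> 0" "s2 \<noteq> 0" "s1' \<noteq> 0" "s2' \<noteq> 0"
    and "l1 \<noteq> l2" "l1' \<noteq> l2'"
  shows "isomorphic_modules tensor_carrier (omega_tensor l1 e1 s1 l2 e2 s2)
                             tensor_carrier (omega_tensor l1' e1' s1' l2' e2' s2')
     \<longleftrightarrow> ((l1, e1, s1) = (l1', e1', s1') \<and> (l2, e2, s2) = (l2', e2', s2')) \<or>
         ((l1, e1, s1) = (l2', e2', s2') \<and> (l2, e2, s2) = (l1', e1', s1'))"
proof
  assume "isomorphic_modules tensor_carrier (omega_tensor l1 e1 s1 l2 e2 s2)
    tensor_carrier (omega_tensor l1' e1' s1' l2' e2' s2')"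
  then show "((l1, e1, s1) = (l1', e1', s1') \<and> (l2, e2, s2) = (l2', e2', s2')) \<or>
      ((l1, e1, s1) = (l2', e2', s2') \<and> (l2, e2, s2) = (l1', e1', s1'))"
    by (rule omega_tensor_isomorphic_imp_params_eq[OF assms])
next
  assume "((l1, e1, s1) = (l1', e1', s1') \<and> (l2, e2, s2) = (l2', e2', s2')) \<or>
    ((l1, e1, s1) = (l2', e2', s2') \<and> (l2, e2, s2) = (l1', e1', s1'))"
  then show "isomorphic_modules tensor_carrier (omega_tensor l1 e1 s1 l2 e2 s2)
      tensor_carrier (omega_tensor l1' e1' s1' l2' e2' s2')"
    by (rule omega_tensor_isomorphic_if_params_eq)
qed

end
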